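(* For $a\in(0,1]$ and $b=\sqrt{1-a^2}$, let $\gamma_a(s)=\hat\gamma_a(s)=\big(a\cos\tfrac{s}{a},a\sin\tfrac{s}{a},b\big)\in S^2$ and $y_a=\gamma_a\otimes\hat\gamma_a:(s,\hat s)\mapsto\gamma_a(s)\otimes\hat\gamma_a(\hat s)\in S^8$, $(s,\hat s)\in[0,2\pi a]^2$. Then $y_a$ is a flat torus and $W(y_a)=2\pi^2(1+a^2)$; in particular $W(y_a)>2\pi^2$ for all $a\in(0,1]$ and $W(y_a)\to 2\pi^2$ as $a\to0$.
   Context: For $x,\hat x\in\mathbb{R}^3$ the tensor product is $x\otimes\hat x=(x_i\hat x_j)_{i,j=1}^3\in\mathbb{R}^9$ (lexicographic order). For a closed immersed surface $x:M\to S^N$ with mean curvature vector $\vec H$ and Gauss curvature $K$, the Willmore functional is $W(x)=\int_M(|\vec H|^2-K+1)\,dM$. *)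

theory Defs
  imports "HOL-Analysis.Analysis"
begin

text \<open>Surfaces are parametrized maps x :: real \<times> real \<Rightarrow> 'a (the ambient
 Euclidean space R^{N+1} containing S^N). Partial derivatives are taken coordinatewise.\<close>

definition pu :: "(real \<times> real \<Rightarrow> 'a::real_normed_vector) \<Rightarrow> real \<times> real \<Rightarrow> 'a" where
  "pu f p = vector_derivative (\<lambda>u. f (u, snd p)) (at (fst p))"

definition pv :: "(real \<times> real \<Rightarrow> 'a::real_normed_vector) \<Rightarrow> real \<times> real \<Rightarrow> 'a" where
  "pv f p = vector_derivative (\<lambda>v. f (fst p, v)) (at (snd p))"

definition fE :: "(real \<times> real \<Rightarrow> 'a::real_inner) \<Rightarrow> real \<times> real \<Rightarrow> real" where
  "fE x p = pu x p \<bullet> pu x p"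
definition fF :: "(real \<times> real \<Rightarrow> 'a::real_inner) \<Rightarrow> real \<times> real \<Rightarrow> real" where
  "fF x p = pu x p \<bullet> pv x p"
definition fG :: "(real \<times> real \<Rightarrow> 'a::real_inner) \<Rightarrow> real \<times> real \<Rightarrow> real" where
  "fG x p = pv x p \<bullet> pv x p"

definition immersed_at :: "(real \<times> real \<Rightarrow> 'a::euclidean_space) \<Rightarrow> real \<times> real \<Rightarrow> bool" where
  "immersed_at x p \<longleftrightarrow> x differentiable (at p) \<and>
     (\<forall>c1 c2::real. c1 *\<^sub>R pu x p + c2 *\<^sub>R pv x p = 0 \<longrightarrow> c1 = 0 \<and> c2 = 0)"

text \<open>Component of a vector w normal to the surface inside the unit sphere, i.e.
 orthogonal projection onto the orthogonal complement of span{x, x_u, x_v}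
 (for |x| = 1 and x_u, x_v tangent to the sphere).\<close>
definition nrm :: "(real \<times> real \<Rightarrow> 'a::euclidean_space) \<Rightarrow> real \<times> real \<Rightarrow> 'a \<Rightarrow> 'a" where
  "nrm x p w =
     (let E = fE x p; F = fF x p; G = fG x p; D = E * G - F * F;
          a = w \<bullet> pu x p; b = w \<bullet> pv x p
      in w - ((G * a - F * b) / D) *\<^sub>R pu x p - ((E * b - F * a) / D) *\<^sub>R pv x p
           - (w \<bullet> x p) *\<^sub>R x p)"

text \<open>Mean curvature vector of x : M \<rightarrow> S^N (second fundamental form h_ij = (x_ij)^\<bottom>,
  H = 1/2 g^{ij} h_ij).\<close>
definition mean_curv_vec :: "(real \<times> real \<Rightarrow> 'a::euclidean_space) \<Rightarrow> real \<times> real \<Rightarrow> 'a" where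
  "mean_curv_vec x p =
     (let E = fE x p; F = fF x p; G = fG x p; D = E * G - F * F;
          h11 = nrm x p (pu (pu x) p); h12 = nrm x p (pv (pu x) p); h22 = nrm x p (pv (pv x) p)
      in (1 / (2 * D)) *\<^sub>R (G *\<^sub>R h11 - (2 * F) *\<^sub>R h12 + E *\<^sub>R h22))"

text \<open>Gauss curvature of the induced metric (intrinsic, Brioschi formula).\<close>
definition gauss_curv :: "(real \<times> real \<Rightarrow> 'a::euclidean_space) \<Rightarrow> real \<times> real \<Rightarrow> real" where
  "gauss_curv x p =
     (let E = fE x p; F = fF x p; G = fG x p; D = E * G - F * F;
          Eu = pu (fE x) p; Ev = pv (fE x) p; Fu = pu (fF x) p; Fv = pv (fF x) p;
          Gu = pu (fG x) p; Gv = pv (fG x) p;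
          Evv = pv (pv (fE x)) p; Fuv = pv (pu (fF x)) p; Guu = pu (pu (fG x)) p;
          A = - Evv / 2 + Fuv - Guu / 2;
          det1 = A * (E * G - F * F) - (Eu / 2) * ((Fv - Gu / 2) * G - F * (Gv / 2))
                 + (Fu - Ev / 2) * ((Fv - Gu / 2) * F - E * (Gv / 2));
          det2 = - (Ev / 2) * ((Ev / 2) * G - F * (Gu / 2))
                 + (Gu / 2) * ((Ev / 2) * F - E * (Gu / 2))
      in (det1 - det2) / (D * D))"

definition willmore :: "(real \<times> real \<Rightarrow> 'a::euclidean_space) \<Rightarrow> real \<Rightarrow> real" where
  "willmore x L = integral (cbox (0, 0) (L, L))
     (\<lambda>p. ((norm (mean_curv_vec x p))\<^sup>2 - gauss_curv x p + 1)
          * sqrt (fE x p * fG x p - fF x p * fF x p))"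

text \<open>Tensor product R^3 \<times> R^3 \<rightarrow> R^9, indexed by pairs (i,j) (lexicographic order
  is an isometric relabelling of coordinates).\<close>
definition tensor :: "real^3 \<Rightarrow> real^3 \<Rightarrow> real^(3 \<times> 3)" where
  "tensor x y = (\<chi> ij. x $ fst ij * y $ snd ij)"

definition gam :: "real \<Rightarrow> real \<Rightarrow> real^3" where
  "gam a s = vector [a * cos (s / a), a * sin (s / a), sqrt (1 - a\<^sup>2)]"

definition ya :: "real \<Rightarrow> real \<times> real \<Rightarrow> real^(3 \<times> 3)" where
  "ya a p = tensor (gam a (fst p)) (gam a (snd p))"

end

theory Submission
  imports Defs
begin

text \<open>For unit-speed curves c, d on the unit sphere, the surface (u, v) \<mapsto> c(u) \<otimes> d(v) lies on
  the sphere and has orthonormal coordinate fields c' \<otimes> d and c \<otimes> d', so it is a flat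
  immersion. Since c \<bullet> c'' = -1, the normal parts of its second derivatives in u and v are
  (c'' + c) \<otimes> d and c \<otimes> (d'' + d); these are orthogonal, so 4|H|^2 is the sum of the squared
  geodesic curvatures |c''|^2 - 1 and |d''|^2 - 1. The circle \<gamma>_a has |\<gamma>_a''| = 1/a, so the
  Willmore integrand is the constant (1 + a^2) / (2 a^2) over a square of area (2 \<pi> a)^2.\<close>

lemma inner_const_derivative:
  fixes f g :: "real \<Rightarrow> 'a::real_inner"
  assumes "(f has_vector_derivative f') (at s)" "(g has_vector_derivative g') (at s)"
    and "\<And>t. f t \<bullet> g t = r"
  shows "f s \<bullet> g' + f' \<bullet> g s = 0"
proof -
  have "((\<lambda>t. f t \<bullet> g t) has_vector_derivative f s \<bullet> g' + f' \<bullet> g s) (at s)"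
    by (rule bounded_bilinear.has_vector_derivative[OF bounded_bilinear_inner assms(1,2)])
  moreover have "((\<lambda>t. f t \<bullet> g t) has_vector_derivative 0) (at s)"
    using assms(3) by simp
  ultimately show ?thesis
    by (rule vector_derivative_unique_at)
qed

locale unit_speed_spherical_curve =
  fixes c c' c'' :: "real \<Rightarrow> 'a::real_inner"
  assumes velocity: "(c has_vector_derivative c' s) (at s)"
    and acceleration: "(c' has_vector_derivative c'' s) (at s)"
    and on_sphere: "c s \<bullet> c s = 1"
    and unit_speed: "c' s \<bullet> c' s = 1"
begin

lemma position_velocity_orthogonal: "c s \<bullet> c' s = 0"
  using inner_const_derivative[OF velocity velocity on_sphere] by (simp add: inner_commute)

lemma velocity_acceleration_orthogonal: "c' s \<bullet> c'' s = 0"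
  using inner_const_derivative[OF acceleration acceleration unit_speed] by (simp add: inner_commute)

lemma position_acceleration: "c s \<bullet> c'' s = -1"
  using inner_const_derivative[OF velocity acceleration position_velocity_orthogonal, of s]
    unit_speed[of s]
  by linarith

lemmas inner_frame =
  on_sphere unit_speed position_velocity_orthogonal velocity_acceleration_orthogonal
  position_acceleration trans[OF inner_commute position_velocity_orthogonal]
  trans[OF inner_commute velocity_acceleration_orthogonal]
  trans[OF inner_commute position_acceleration]

end

lemma bounded_bilinear_tensor: "bounded_bilinear tensor"
  unfolding bilinear_conv_bounded_bilinear[symmetric] bilinear_def
  by (auto intro!: linearI simp: tensor_def vec_eq_iff algebra_simps)

lemma inner_tensor: "tensor x y \<bullet> tensor z w = (x \<bullet> z) * (y \<bullet> w)"
proof -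
  have "tensor x y \<bullet> tensor z w = (\<Sum>(i, j)\<in>UNIV \<times> UNIV. (x$i * z$i) * (y$j * w$j))"
    unfolding inner_vec_def tensor_def inner_real_def UNIV_Times_UNIV
    by (intro sum.cong refl) (simp add: split_beta mult_ac)
  also have "\<dots> = (\<Sum>i\<in>UNIV. \<Sum>j\<in>UNIV. (x$i * z$i) * (y$j * w$j))"
    by (rule sum.cartesian_product[symmetric])
  also have "\<dots> = (\<Sum>i\<in>UNIV. x$i * z$i) * (\<Sum>j\<in>UNIV. y$j * w$j)"
    by (rule sum_product[symmetric])
  finally show ?thesis
    by (simp add: inner_vec_def)
qed

definition tensor_surface :: "(real \<Rightarrow> real^3) \<Rightarrow> (real \<Rightarrow> real^3) \<Rightarrow> real \<times> real \<Rightarrow> real^(3 \<times> 3)"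
  where "tensor_surface c d p = tensor (c (fst p)) (d (snd p))"

lemma pu_tensor_surface:
  assumes "\<And>u. (c has_vector_derivative c' u) (at u)"
  shows "pu (tensor_surface c d) = tensor_surface c' d"
proof
  fix p :: "real \<times> real"
  have "((\<lambda>u. tensor (c u) (d (snd p))) has_vector_derivative
          tensor (c (fst p)) 0 + tensor (c' (fst p)) (d (snd p))) (at (fst p))"
    by (rule bounded_bilinear.has_vector_derivative[OF bounded_bilinear_tensor assms]) simp
  then show "pu (tensor_surface c d) p = tensor_surface c' d p"
    unfolding pu_def tensor_surface_def
    by (simp add: vector_derivative_at bounded_bilinear.zero_right[OF bounded_bilinear_tensor])
qed

lemma pv_tensor_surface:
  assumes "\<And>v. (d has_vector_derivative d' v) (at v)"
  shows "pv (tensor_surface c d) = tensor_surface c d'"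
proof
  fix p :: "real \<times> real"
  have "((\<lambda>v. tensor (c (fst p)) (d v)) has_vector_derivative
          tensor (c (fst p)) (d' (snd p)) + tensor 0 (d (snd p))) (at (snd p))"
    by (rule bounded_bilinear.has_vector_derivative[OF bounded_bilinear_tensor _ assms]) simp
  then show "pv (tensor_surface c d) p = tensor_surface c d' p"
    unfolding pv_def tensor_surface_def
    by (simp add: vector_derivative_at bounded_bilinear.zero_left[OF bounded_bilinear_tensor])
qed

lemma differentiable_tensor_surface:
  assumes "\<And>u. (c has_vector_derivative c' u) (at u)" "\<And>v. (d has_vector_derivative d' v) (at v)"
  shows "tensor_surface c d differentiable (at p)"
proof -
  have "((\<lambda>p. c (fst p)) has_derivative (\<lambda>h. fst h *\<^sub>R c' (fst p))) (at p)"
    using diff_chain_at[OF has_derivative_fst[OF has_derivative_ident]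
        assms(1)[of "fst p", unfolded has_vector_derivative_def]]
    by (simp add: o_def)
  moreover have "((\<lambda>p. d (snd p)) has_derivative (\<lambda>h. snd h *\<^sub>R d' (snd p))) (at p)"
    using diff_chain_at[OF has_derivative_snd[OF has_derivative_ident]
        assms(2)[of "snd p", unfolded has_vector_derivative_def]]
    by (simp add: o_def)
  ultimately show ?thesis
    unfolding tensor_surface_def[abs_def] differentiable_def
    using bounded_bilinear.FDERIV[OF bounded_bilinear_tensor] by blast
qed

lemma pu_const: "pu (\<lambda>p. k) = (\<lambda>p. 0)"
  by (rule ext) (simp add: pu_def vector_derivative_const_at)

lemma pv_const: "pv (\<lambda>p. k) = (\<lambda>p. 0)"
  by (rule ext) (simp add: pv_def vector_derivative_const_at)

lemma gauss_curv_orthonormal_coordinates: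
  assumes "fE x = (\<lambda>p. 1)" "fF x = (\<lambda>p. 0)" "fG x = (\<lambda>p. 1)"
  shows "gauss_curv x p = 0"
  by (simp add: gauss_curv_def Let_def assms pu_const pv_const)

lemma nrm_orthonormal_coordinates:
  assumes "fE x p = 1" "fF x p = 0" "fG x p = 1"
  shows "nrm x p w = w - (w \<bullet> pu x p) *\<^sub>R pu x p - (w \<bullet> pv x p) *\<^sub>R pv x p - (w \<bullet> x p) *\<^sub>R x p"
  by (simp add: nrm_def Let_def assms)

lemma mean_curv_vec_orthonormal_coordinates:
  assumes "fE x p = 1" "fF x p = 0" "fG x p = 1"
  shows "mean_curv_vec x p = (1 / 2) *\<^sub>R (nrm x p (pu (pu x) p) + nrm x p (pv (pv x) p))"
  by (simp add: mean_curv_vec_def Let_def assms)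

locale spherical_tensor_torus =
  c: unit_speed_spherical_curve c c' c'' + d: unit_speed_spherical_curve d d' d''
  for c c' c'' d d' d'' :: "real \<Rightarrow> real^3"
begin

abbreviation "X \<equiv> tensor_surface c d"

lemmas coordinate_fields =
  pu_tensor_surface[OF c.velocity] pv_tensor_surface[OF d.velocity]
  pu_tensor_surface[OF c.acceleration] pv_tensor_surface[OF d.acceleration]

lemmas inner_simps = inner_tensor c.inner_frame d.inner_frame tensor_surface_def

lemma norm_X: "norm (X p) = 1"
  by (simp add: norm_eq_sqrt_inner inner_simps)

lemma fE_X: "fE X = (\<lambda>p. 1)"
  by (rule ext) (simp add: fE_def coordinate_fields inner_simps)

lemma fF_X: "fF X = (\<lambda>p. 0)"
  by (rule ext) (simp add: fF_def coordinate_fields inner_simps)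

lemma fG_X: "fG X = (\<lambda>p. 1)"
  by (rule ext) (simp add: fG_def coordinate_fields inner_simps)

lemma gauss_curv_X: "gauss_curv X p = 0"
  by (rule gauss_curv_orthonormal_coordinates[OF fE_X fF_X fG_X])

lemma immersed_X: "immersed_at X p"
  unfolding immersed_at_def
proof
  show "X differentiable (at p)"
    by (rule differentiable_tensor_surface[OF c.velocity d.velocity])
  show "\<forall>k l. k *\<^sub>R pu X p + l *\<^sub>R pv X p = 0 \<longrightarrow> k = 0 \<and> l = 0"
  proof (intro allI impI)
    fix k l :: real
    assume "k *\<^sub>R pu X p + l *\<^sub>R pv X p = 0"
    then have "(k *\<^sub>R pu X p + l *\<^sub>R pv X p) \<bullet> pu X p = 0"
      "(k *\<^sub>R pu X p + l *\<^sub>R pv X p) \<bullet> pv X p = 0"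
      by simp_all
    then show "k = 0 \<and> l = 0"
      by (simp add: inner_add_left coordinate_fields inner_simps)
  qed
qed

lemma mean_curv_vec_X:
  "mean_curv_vec X (u, v) = (1 / 2) *\<^sub>R (tensor (c'' u + c u) (d v) + tensor (c u) (d'' v + d v))"
proof -
  have E: "fE X (u, v) = 1" and F: "fF X (u, v) = 0" and G: "fG X (u, v) = 1"
    by (simp_all add: fE_X fF_X fG_X)
  show ?thesis
    unfolding mean_curv_vec_orthonormal_coordinates[OF E F G] nrm_orthonormal_coordinates[OF E F G]
    by (simp add: coordinate_fields inner_simps
        bounded_bilinear.add_left[OF bounded_bilinear_tensor]
        bounded_bilinear.add_right[OF bounded_bilinear_tensor])
qed

lemma norm_mean_curv_vec_X:
  "(norm (mean_curv_vec X p))\<^sup>2 = ((norm (c'' (fst p)))\<^sup>2 + (norm (d'' (snd p)))\<^sup>2 - 2) / 4"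
proof -
  obtain u v where p: "p = (u, v)" by fastforce
  show ?thesis
    unfolding p mean_curv_vec_X power2_norm_eq_inner
    by (simp add: inner_add_left inner_add_right inner_simps algebra_simps)
qed

lemma willmore_X:
  assumes "\<And>u. norm (c'' u) = \<kappa>" "\<And>v. norm (d'' v) = \<mu>" "0 \<le> L"
  shows "willmore X L = L\<^sup>2 * (\<kappa>\<^sup>2 + \<mu>\<^sup>2 + 2) / 4"
proof -
  have integrand: "((norm (mean_curv_vec X p))\<^sup>2 - gauss_curv X p + 1)
      * sqrt (fE X p * fG X p - fF X p * fF X p) = (\<kappa>\<^sup>2 + \<mu>\<^sup>2 + 2) / 4" for p
    by (simp add: norm_mean_curv_vec_X assms gauss_curv_X fE_X fF_X fG_X field_simps)
  have "measure lborel (cbox (0::real, 0::real) (L, L)) = L\<^sup>2"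
    using assms(3) by (simp add: content_Pair power2_eq_square)
  then show ?thesis
    unfolding willmore_def integrand by simp
qed

end

definition gam_vel :: "real \<Rightarrow> real \<Rightarrow> real^3" where
  "gam_vel a s = vector [- sin (s / a), cos (s / a), 0]"

definition gam_acc :: "real \<Rightarrow> real \<Rightarrow> real^3" where
  "gam_acc a s = vector [- cos (s / a) / a, - sin (s / a) / a, 0]"

lemma inner_vector3: "(vector [x, y, z] :: real^3) \<bullet> vector [x', y', z'] = x * x' + y * y' + z * z'"
  by (simp add: inner_vec_def sum_3 vector_3)

lemma vector3_eq_combination:
  "(vector [x, y, z] :: real^3) = x *\<^sub>R vector [1, 0, 0] + y *\<^sub>R vector [0, 1, 0] + z *\<^sub>R vector [0, 0, 1]"
  by (simp add: vec_eq_iff forall_3 vector_3)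

lemma has_vector_derivative_vector3:
  assumes "(f has_real_derivative f') (at s within S)" "(g has_real_derivative g') (at s within S)"
    "(h has_real_derivative h') (at s within S)"
  shows "((\<lambda>s. vector [f s, g s, h s] :: real^3) has_vector_derivative vector [f', g', h'])
    (at s within S)"
proof -
  have "((\<lambda>s. f s *\<^sub>R (vector [1, 0, 0] :: real^3) + g s *\<^sub>R vector [0, 1, 0] + h s *\<^sub>R vector [0, 0, 1])
      has_vector_derivative f' *\<^sub>R vector [1, 0, 0] + g' *\<^sub>R vector [0, 1, 0] + h' *\<^sub>R vector [0, 0, 1])
      (at s within S)"
    using assms
    by (intro has_vector_derivative_add has_vector_derivative_scaleR[where g' = 0, simplified]) simp_all
  then show ?thesis
    by (subst (1 2) vector3_eq_combination) simp
qed

lemma sin_cos_scaled_squares: "(r * cos t) * (r * cos t) + (r * sin t) * (r * sin t) = r * (r::real)"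
proof -
  have "(r * cos t) * (r * cos t) + (r * sin t) * (r * sin t) = (r * r) * ((sin t)\<^sup>2 + (cos t)\<^sup>2)"
    unfolding power2_eq_square by algebra
  then show ?thesis by simp
qed

lemma has_vector_derivative_gam:
  assumes "0 < a"
  shows "(gam a has_vector_derivative gam_vel a s) (at s)"
proof -
  have "((\<lambda>s. a * cos (s / a)) has_real_derivative - sin (s / a)) (at s)"
    "((\<lambda>s. a * sin (s / a)) has_real_derivative cos (s / a)) (at s)"
    using assms by (auto intro!: derivative_eq_intros)
  then show ?thesis
    unfolding gam_def[abs_def] gam_vel_def by (intro has_vector_derivative_vector3 DERIV_const)
qed

lemma has_vector_derivative_gam_vel:
  assumes "0 < a"
  shows "(gam_vel a has_vector_derivative gam_acc a s) (at s)"
proof -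
  have "((\<lambda>s. - sin (s / a)) has_real_derivative - cos (s / a) / a) (at s)"
    "((\<lambda>s. cos (s / a)) has_real_derivative - sin (s / a) / a) (at s)"
    using assms by (auto intro!: derivative_eq_intros)
  then show ?thesis
    unfolding gam_vel_def[abs_def] gam_acc_def by (intro has_vector_derivative_vector3 DERIV_const)
qed

lemma unit_speed_spherical_curve_gam:
  assumes "0 < a" "a \<le> 1"
  shows "unit_speed_spherical_curve (gam a) (gam_vel a) (gam_acc a)"
proof
  fix s
  show "(gam a has_vector_derivative gam_vel a s) (at s)"
    "(gam_vel a has_vector_derivative gam_acc a s) (at s)"
    using assms by (simp_all add: has_vector_derivative_gam has_vector_derivative_gam_vel)
  have "sqrt (1 - a\<^sup>2) * sqrt (1 - a\<^sup>2) = 1 - a\<^sup>2"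
    using assms by (simp add: power_le_one)
  then show "gam a s \<bullet> gam a s = 1"
    unfolding gam_def inner_vector3 sin_cos_scaled_squares by (simp add: power2_eq_square)
  show "gam_vel a s \<bullet> gam_vel a s = 1"
    using sin_cos_squared_add3[of "s / a"] by (simp add: gam_vel_def inner_vector3 add.commute)
qed

lemma spherical_tensor_torus_gam:
  assumes "0 < a" "a \<le> 1"
  shows "spherical_tensor_torus (gam a) (gam_vel a) (gam_acc a) (gam a) (gam_vel a) (gam_acc a)"
  using unit_speed_spherical_curve_gam[OF assms] by (simp add: spherical_tensor_torus_def)

lemma norm_gam_acc:
  assumes "0 < a"
  shows "norm (gam_acc a s) = 1 / a"
proof -
  have "gam_acc a s \<bullet> gam_acc a s = (1 / a) * (1 / a)"
    using sin_cos_scaled_squares[of "1 / a" "s / a"] by (simp add: gam_acc_def inner_vector3)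
  then show ?thesis
    using assms by (simp add: norm_eq_sqrt_inner real_sqrt_divide)
qed

lemma gam_periodic:
  assumes "0 < a"
  shows "gam a (s + 2 * pi * a) = gam a s"
proof -
  have "(s + 2 * pi * a) / a = s / a + 2 * pi"
    using assms by (simp add: field_simps)
  then show ?thesis
    by (simp add: gam_def)
qed

lemma ya_tensor_surface: "ya a = tensor_surface (gam a) (gam a)"
  by (simp add: fun_eq_iff ya_def tensor_surface_def)

lemma willmore_ya:
  assumes "0 < a" "a \<le> 1"
  shows "willmore (ya a) (2 * pi * a) = 2 * pi\<^sup>2 * (1 + a\<^sup>2)"
proof -
  interpret spherical_tensor_torus "gam a" "gam_vel a" "gam_acc a" "gam a" "gam_vel a" "gam_acc a"
    by (rule spherical_tensor_torus_gam[OF assms])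
  have "willmore (ya a) (2 * pi * a) = (2 * pi * a)\<^sup>2 * ((1 / a)\<^sup>2 + (1 / a)\<^sup>2 + 2) / 4"
    unfolding ya_tensor_surface using assms by (intro willmore_X norm_gam_acc) simp_all
  also have "\<dots> = 2 * pi\<^sup>2 * (1 + a\<^sup>2)"
    using assms by (simp add: field_simps power2_eq_square)
  finally show ?thesis .
qed

theorem mainTheorem5:
  shows "(\<forall>a. 0 < a \<and> a \<le> 1 \<longrightarrow>
            (\<forall>p. norm (ya a p) = 1)
          \<and> (\<forall>s t. ya a (s + 2 * pi * a, t) = ya a (s, t) \<and> ya a (s, t + 2 * pi * a) = ya a (s, t))
          \<and> (\<forall>p. immersed_at (ya a) p)
          \<and> (\<forall>p. gauss_curv (ya a) p = 0)
          \<and> willmore (ya a) (2 * pi * a) = 2 * pi\<^sup>2 * (1 + a\<^sup>2)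
          \<and> willmore (ya a) (2 * pi * a) > 2 * pi\<^sup>2)
       \<and> ((\<lambda>a. willmore (ya a) (2 * pi * a)) \<longlongrightarrow> 2 * pi\<^sup>2) (at_right 0)"
proof (intro conjI allI impI; (elim conjE)?)
  fix a :: real
  assume a: "0 < a" "a \<le> 1"
  interpret spherical_tensor_torus "gam a" "gam_vel a" "gam_acc a" "gam a" "gam_vel a" "gam_acc a"
    by (rule spherical_tensor_torus_gam[OF a])
  show "norm (ya a p) = 1" "immersed_at (ya a) p" "gauss_curv (ya a) p = 0" for p
    unfolding ya_tensor_surface by (fact norm_X immersed_X gauss_curv_X)+
  show "ya a (s + 2 * pi * a, t) = ya a (s, t)" "ya a (s, t + 2 * pi * a) = ya a (s, t)" for s t
    by (simp_all add: ya_def gam_periodic a)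
  show "willmore (ya a) (2 * pi * a) = 2 * pi\<^sup>2 * (1 + a\<^sup>2)"
    by (rule willmore_ya[OF a])
  then show "willmore (ya a) (2 * pi * a) > 2 * pi\<^sup>2"
    using a by (simp add: algebra_simps)
next
  have "\<forall>\<^sub>F a in at_right 0. 2 * pi\<^sup>2 * (1 + a\<^sup>2) = willmore (ya a) (2 * pi * a)"
  proof -
    have "\<forall>\<^sub>F a in at_right 0. a \<in> {0<..<1::real}"
      by (rule eventually_at_right_real) simp
    then show ?thesis
      by eventually_elim (simp add: willmore_ya)
  qed
  moreover have "((\<lambda>a::real. 2 * pi\<^sup>2 * (1 + a\<^sup>2)) \<longlongrightarrow> 2 * pi\<^sup>2 * (1 + 0\<^sup>2)) (at_right 0)"
    by (intro tendsto_intros)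
  ultimately show "((\<lambda>a. willmore (ya a) (2 * pi * a)) \<longlongrightarrow> 2 * pi\<^sup>2) (at_right 0)"
    by (simp add: Lim_transform_eventually)
qed

end
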